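(* Let $K$ be a field of characteristic zero and $W_n$ the Witt Lie algebra. Then $\sigma(\mathcal{H}_n)=\mathcal{H}_n$ for every Lie algebra automorphism $\sigma$ of $W_n$.
   Context: $W_n=\mathrm{Der}_K(K[x_1^{\pm1},\ldots,x_n^{\pm1}])$, $\mathcal{H}_n=\bigoplus_{i=1}^nKH_i$ with $H_i=x_i\partial_i$, $\partial_i=\partial/\partial x_i$. *)

theory Defs
  imports "HOL-Library.Poly_Mapping"
begin

text \<open>Laurent polynomials K[x_1^{+-1},...,x_n^{+-1}], variables indexed by a finite type 'n:
  finitely supported maps from exponent vectors ('n =>0 int) to coefficients in K.\<close>
type_synonym ('n, 'k) laurent = "('n \<Rightarrow>\<^sub>0 int) \<Rightarrow>\<^sub>0 'k"

definition lconst :: "'k::comm_ring_1 \<Rightarrow> ('n, 'k) laurent" where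
  "lconst c = Poly_Mapping.single 0 c"

definition is_derivation :: "(('n, 'k::field) laurent \<Rightarrow> ('n, 'k) laurent) \<Rightarrow> bool" where
  "is_derivation D \<longleftrightarrow>
     (\<forall>f g. D (f + g) = D f + D g) \<and>
     (\<forall>c f. D (lconst c * f) = lconst c * D f) \<and>
     (\<forall>f g. D (f * g) = f * D g + g * D f)"

definition Witt :: "(('n, 'k::field) laurent \<Rightarrow> ('n, 'k) laurent) set" where
  "Witt = {D. is_derivation D}"

definition lie :: "(('n, 'k::field) laurent \<Rightarrow> ('n, 'k) laurent)
    \<Rightarrow> (('n, 'k) laurent \<Rightarrow> ('n, 'k) laurent) \<Rightarrow> ('n, 'k) laurent \<Rightarrow> ('n, 'k) laurent" where
  "lie D E = (\<lambda>f. D (E f) - E (D f))"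

definition wscale :: "'k::field \<Rightarrow> (('n, 'k) laurent \<Rightarrow> ('n, 'k) laurent)
    \<Rightarrow> ('n, 'k) laurent \<Rightarrow> ('n, 'k) laurent" where
  "wscale c D = (\<lambda>f. lconst c * D f)"

definition witt_aut :: "((('n, 'k::field) laurent \<Rightarrow> ('n, 'k) laurent)
    \<Rightarrow> (('n, 'k) laurent \<Rightarrow> ('n, 'k) laurent)) \<Rightarrow> bool" where
  "witt_aut \<sigma> \<longleftrightarrow> bij_betw \<sigma> Witt Witt \<and>
     (\<forall>D\<in>Witt. \<forall>E\<in>Witt. \<sigma> (\<lambda>f. D f + E f) = (\<lambda>f. \<sigma> D f + \<sigma> E f)) \<and>
     (\<forall>c. \<forall>D\<in>Witt. \<sigma> (wscale c D) = wscale c (\<sigma> D)) \<and>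
     (\<forall>D\<in>Witt. \<forall>E\<in>Witt. \<sigma> (lie D E) = lie (\<sigma> D) (\<sigma> E))"

text \<open>H_i = x_i d/dx_i: sends the monomial x^a to a_i x^a.\<close>
definition Hder :: "'n \<Rightarrow> ('n, 'k::field) laurent \<Rightarrow> ('n, 'k) laurent" where
  "Hder i f = (\<Sum>a\<in>Poly_Mapping.keys f. Poly_Mapping.single (a :: 'n \<Rightarrow>\<^sub>0 int) (of_int (Poly_Mapping.lookup a i) * Poly_Mapping.lookup f a))"

definition Cartan :: "(('n::finite, 'k::field) laurent \<Rightarrow> ('n, 'k) laurent) set" where
  "Cartan = {D. \<exists>c :: 'n \<Rightarrow> 'k. D = (\<lambda>f. \<Sum>i\<in>UNIV. wscale (c i) (Hder i) f)}"

end

theory Submission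
  imports Defs "HOL-Library.Function_Algebras"
begin

text \<open>Every derivation of the Laurent polynomial ring is a vector field \<open>\<Sum>\<^sub>j u\<^sub>j H\<^sub>j\<close> with Laurent
  polynomial coefficients, determined by its values on the variables. The Cartan subalgebra is
  characterised intrinsically as the set of ad-locally finite elements \<open>D\<close>, those for which every
  orbit \<open>(ad D)\<^sup>k E\<close> lies in a finite-dimensional subspace; this property is preserved by every
  automorphism. A constant field \<open>\<Sum>\<^sub>i c\<^sub>i H\<^sub>i\<close> acts diagonally on the fields \<open>x\<^sup>a H\<^sub>j\<close>, with eigenvalue
  \<open>\<Sum>\<^sub>i c\<^sub>i a\<^sub>i\<close>. Conversely, if some \<open>u\<^sub>j\<close> contains a monomial \<open>x\<^sup>m\<close> with \<open>m \<noteq> 0\<close>, take \<open>m\<close> extremal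
  for a total order on \<open>\<int>\<^sup>n\<close> compatible with addition: then \<open>ad D\<close> shifts the leading exponent of a
  suitable monomial field by \<open>m\<close> at every step, with a leading coefficient that stays nonzero in
  characteristic zero, so the orbit spans an infinite-dimensional space.\<close>

type_synonym ('n, 'k) wfield = "('n, 'k) laurent \<Rightarrow> ('n, 'k) laurent"

lemma sum_fun_apply: "(\<Sum>i\<in>A. F i) x = (\<Sum>i\<in>A. F i x)"
  by (induction A rule: infinite_finite_induct) auto

definition diag_op :: "(('n \<Rightarrow>\<^sub>0 int) \<Rightarrow> 'k::field) \<Rightarrow> ('n, 'k) laurent \<Rightarrow> ('n, 'k) laurent" where
  "diag_op \<phi> f = Poly_Mapping.mapp (\<lambda>a c. \<phi> a * c) f"

lemma lookup_diag_op [simp]: "Poly_Mapping.lookup (diag_op \<phi> f) a = \<phi> a * Poly_Mapping.lookup f a"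
  by (auto simp: diag_op_def lookup_mapp when_def in_keys_iff)

lemma diag_op_add: "diag_op \<phi> (f + g) = diag_op \<phi> f + diag_op \<phi> g"
  by (rule poly_mapping_eqI) (simp add: lookup_add algebra_simps)

lemma diag_op_sum: "diag_op \<phi> (sum g A) = (\<Sum>x\<in>A. diag_op \<phi> (g x))"
  by (rule poly_mapping_eqI) (simp add: lookup_sum sum_distrib_left)

lemma diag_op_single [simp]: "diag_op \<phi> (Poly_Mapping.single a c) = Poly_Mapping.single a (\<phi> a * c)"
  by (rule poly_mapping_eqI) (simp add: Poly_Mapping.lookup_single when_def)

lemma diag_op_comp: "diag_op \<phi> (diag_op \<psi> f) = diag_op (\<lambda>a. \<phi> a * \<psi> a) f"
  by (rule poly_mapping_eqI) (simp add: algebra_simps)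

lemma keys_diag_op: "Poly_Mapping.keys (diag_op \<phi> f) \<subseteq> Poly_Mapping.keys f"
  by (auto simp: in_keys_iff)

lemma lookup_lconst_mult [simp]:
  "Poly_Mapping.lookup (lconst c * f) a = c * Poly_Mapping.lookup f a"
  unfolding lconst_def mult_map_scale_conv_mult[symmetric]
  by (simp add: Poly_Mapping.map.rep_eq when_def)

lemma keys_lconst_mult: "Poly_Mapping.keys (lconst c * f) \<subseteq> Poly_Mapping.keys f"
  by (auto simp: in_keys_iff)

lemma diag_op_lconst_mult: "diag_op \<phi> (lconst c * f) = lconst c * diag_op \<phi> f"
  by (rule poly_mapping_eqI) (simp only: lookup_diag_op lookup_lconst_mult mult.left_commute)

lemma poly_mapping_eq_sum_single:
  assumes "finite A" "Poly_Mapping.keys f \<subseteq> A"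
  shows "f = (\<Sum>a\<in>A. Poly_Mapping.single a (Poly_Mapping.lookup f a))"
proof (rule poly_mapping_eqI)
  fix k
  have "(\<Sum>a\<in>A. Poly_Mapping.lookup (Poly_Mapping.single a (Poly_Mapping.lookup f a)) k)
      = (\<Sum>a\<in>A. if a = k then Poly_Mapping.lookup f a else 0)"
    by (rule sum.cong) (auto simp: Poly_Mapping.lookup_single when_def)
  also have "\<dots> = Poly_Mapping.lookup f k"
    using assms by (auto simp: in_keys_iff)
  finally show "Poly_Mapping.lookup f k
      = Poly_Mapping.lookup (\<Sum>a\<in>A. Poly_Mapping.single a (Poly_Mapping.lookup f a)) k"
    by (simp add: lookup_sum)
qed

lemma poly_mapping_eq_sum_keys:
  "f = (\<Sum>a\<in>Poly_Mapping.keys f. Poly_Mapping.single a (Poly_Mapping.lookup f a))"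
  by (rule poly_mapping_eq_sum_single) auto

lemma diag_op_mult:
  assumes add: "\<And>a b. \<phi> (a + b) = \<phi> a + \<phi> b"
  shows "diag_op \<phi> (f * g) = f * diag_op \<phi> g + g * diag_op \<phi> f"
proof -
  define A where "A = Poly_Mapping.keys f"
  define B where "B = Poly_Mapping.keys g"
  note single_mult = sum_distrib_left sum_distrib_right mult_single sum.swap[of _ B A]
  have fA: "f = (\<Sum>a\<in>A. Poly_Mapping.single a (Poly_Mapping.lookup f a))"
    and gB: "g = (\<Sum>b\<in>B. Poly_Mapping.single b (Poly_Mapping.lookup g b))"
    using poly_mapping_eq_sum_keys A_def B_def by blast+
  have fg: "f * g = (\<Sum>a\<in>A. \<Sum>b\<in>B.
      Poly_Mapping.single (a + b) (Poly_Mapping.lookup f a * Poly_Mapping.lookup g b))"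
    by (subst fA, subst gB) (simp add: single_mult)
  have "diag_op \<phi> (f * g)
      = (\<Sum>a\<in>A. \<Sum>b\<in>B. Poly_Mapping.single (a + b)
           (Poly_Mapping.lookup f a * (\<phi> b * Poly_Mapping.lookup g b)))
      + (\<Sum>a\<in>A. \<Sum>b\<in>B. Poly_Mapping.single (a + b)
           ((\<phi> a * Poly_Mapping.lookup f a) * Poly_Mapping.lookup g b))"
    by (simp add: fg diag_op_sum add sum.distrib[symmetric] single_add[symmetric] algebra_simps)
  also have "(\<Sum>a\<in>A. \<Sum>b\<in>B. Poly_Mapping.single (a + b)
      (Poly_Mapping.lookup f a * (\<phi> b * Poly_Mapping.lookup g b))) = f * diag_op \<phi> g"
    by (subst (2) fA, subst (2) gB) (simp add: diag_op_sum single_mult)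
  also have "(\<Sum>a\<in>A. \<Sum>b\<in>B. Poly_Mapping.single (a + b)
      ((\<phi> a * Poly_Mapping.lookup f a) * Poly_Mapping.lookup g b)) = diag_op \<phi> f * g"
    by (subst (2) fA, subst (2) gB) (simp add: diag_op_sum single_mult)
  finally show ?thesis by (simp add: mult.commute)
qed

lemma Hder_eq_diag_op: "Hder i = diag_op (\<lambda>a. of_int (Poly_Mapping.lookup a i))"
proof (intro ext poly_mapping_eqI)
  fix f :: "('a, 'b) laurent" and k
  have "Poly_Mapping.lookup (Hder i f) k = (\<Sum>a\<in>Poly_Mapping.keys f.
      if a = k then of_int (Poly_Mapping.lookup a i) * Poly_Mapping.lookup f a else 0)"
    unfolding Hder_def lookup_sum
    by (rule sum.cong) (auto simp: Poly_Mapping.lookup_single when_def)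
  also have "\<dots> = of_int (Poly_Mapping.lookup k i) * Poly_Mapping.lookup f k"
    by (auto simp: in_keys_iff)
  finally show "Poly_Mapping.lookup (Hder i f) k
      = Poly_Mapping.lookup (diag_op (\<lambda>a. of_int (Poly_Mapping.lookup a i)) f) k"
    by simp
qed

lemma Hder_add: "Hder i (f + g) = Hder i f + Hder i g"
  by (simp add: Hder_eq_diag_op diag_op_add)

lemma Hder_sum: "Hder i (sum g A) = (\<Sum>x\<in>A. Hder i (g x))"
  by (simp add: Hder_eq_diag_op diag_op_sum)

lemma Hder_lconst_mult: "Hder i (lconst c * f) = lconst c * Hder i f"
  by (simp add: Hder_eq_diag_op diag_op_lconst_mult)

lemma Hder_mult: "Hder i (f * g) = f * Hder i g + g * Hder i f"
  unfolding Hder_eq_diag_op by (rule diag_op_mult) (simp add: lookup_add)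

lemma Hder_lconst [simp]: "Hder i (lconst c) = 0"
  by (simp add: Hder_eq_diag_op lconst_def)

lemma Hder_commute: "Hder i (Hder j f) = Hder j (Hder i f)"
  by (simp add: Hder_eq_diag_op diag_op_comp mult.commute)

lemma Hder_single:
  "Hder j (Poly_Mapping.single c x) = Poly_Mapping.single c (of_int (Poly_Mapping.lookup c j) * x)"
  by (simp add: Hder_eq_diag_op)

lemma keys_Hder: "Poly_Mapping.keys (Hder j f) \<subseteq> Poly_Mapping.keys f"
  unfolding Hder_eq_diag_op by (rule keys_diag_op)

definition monom :: "('n \<Rightarrow>\<^sub>0 int) \<Rightarrow> ('n, 'k::field) laurent" where
  "monom a = Poly_Mapping.single a 1"

definition var :: "'n \<Rightarrow> ('n, 'k::field) laurent" where
  "var j = monom (Poly_Mapping.single j 1)"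

definition var_inv :: "'n \<Rightarrow> ('n, 'k::field) laurent" where
  "var_inv j = monom (Poly_Mapping.single j (-1))"

lemma monom_add: "monom (a + b) = monom a * monom b"
  by (simp add: monom_def mult_single)

lemma monom_0: "monom 0 = 1"
  by (simp add: monom_def)

lemma var_mult_var_inv: "var j * var_inv j = 1"
  by (simp add: var_def var_inv_def monom_add[symmetric] single_add[symmetric] monom_0)

lemma single_eq_lconst_mult_monom: "Poly_Mapping.single a c = lconst c * monom a"
  by (simp add: lconst_def monom_def mult_single)

lemma Hder_var: "Hder i (var j) = (if i = j then var j else 0)"
  by (simp add: Hder_eq_diag_op var_def monom_def Poly_Mapping.lookup_single when_def)

subsection \<open>Derivations are vector fields\<close>

definition vfield :: "('n \<Rightarrow> ('n, 'k::field) laurent) \<Rightarrow> ('n, 'k) wfield" where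
  "vfield u f = (\<Sum>j\<in>UNIV. u j * Hder j f)"

lemma vfield_add: "vfield u (f + g) = vfield u f + vfield u g"
  by (simp add: vfield_def Hder_add distrib_left sum.distrib)

lemma vfield_lconst_mult: "vfield u (lconst c * f) = lconst c * vfield u f"
  by (simp add: vfield_def Hder_lconst_mult sum_distrib_left mult.left_commute)

lemma vfield_mult: "vfield u (f * g) = f * vfield u g + g * vfield u f"
  by (simp add: vfield_def Hder_mult sum_distrib_left sum.distrib algebra_simps)

lemma is_derivation_vfield: "is_derivation (vfield u)"
  unfolding is_derivation_def using vfield_add vfield_lconst_mult vfield_mult by blast

lemma vfield_var: "vfield u (var (j::'n::finite)) = u j * var j"
proof -
  have "vfield u (var j) = (\<Sum>i\<in>UNIV. if i = j then u j * var j else 0)"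
    unfolding vfield_def by (rule sum.cong) (auto simp: Hder_var)
  then show ?thesis by simp
qed

lemma inj_vfield: "inj (vfield :: ('n::finite \<Rightarrow> ('n, 'k::field) laurent) \<Rightarrow> _)"
proof (rule injI, rule ext)
  fix u v :: "'n \<Rightarrow> ('n, 'k) laurent" and j
  assume "vfield u = vfield v"
  then have "u j * var j * var_inv j = v j * var j * var_inv j"
    by (metis vfield_var)
  then show "u j = v j" by (simp add: mult.assoc var_mult_var_inv)
qed

lemma derivation_0:
  assumes "is_derivation D" shows "D 0 = 0"
proof -
  have "D (0 + 0) = D 0 + D 0" using assms unfolding is_derivation_def by blast
  then show ?thesis by simp
qed

lemma derivation_1:
  assumes "is_derivation D" shows "D 1 = 0"
proof -
  have "D (1 * 1) = 1 * D 1 + 1 * D 1" using assms unfolding is_derivation_def by blast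
  then show ?thesis by simp
qed

lemma derivation_add: "is_derivation D \<Longrightarrow> D (f + g) = D f + D g"
  unfolding is_derivation_def by blast

lemma derivation_lconst_mult: "is_derivation D \<Longrightarrow> D (lconst c * f) = lconst c * D f"
  unfolding is_derivation_def by blast

lemma derivation_mult: "is_derivation D \<Longrightarrow> D (f * g) = f * D g + g * D f"
  unfolding is_derivation_def by blast

lemma derivation_sum:
  assumes "is_derivation D" shows "D (sum g A) = (\<Sum>x\<in>A. D (g x))"
  by (induction A rule: infinite_finite_induct)
    (simp_all add: derivation_0[OF assms] derivation_add[OF assms])

text \<open>By the Leibniz rule, two derivations agreeing on the variables agree on all monomials:
  on \<open>x\<^sub>j\<^sup>-\<^sup>1\<close> because \<open>x\<^sub>j x\<^sub>j\<^sup>-\<^sup>1 = 1\<close>, and then on products.\<close>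

lemma derivations_agree_monom_add:
  assumes "is_derivation D" "is_derivation E"
    and "D (monom a) = E (monom a)" "D (monom b) = E (monom b)"
  shows "D (monom (a + b)) = E (monom (a + b))"
  using assms by (simp add: monom_add derivation_mult)

lemma derivations_agree_var_inv:
  assumes D: "is_derivation D" and E: "is_derivation E" and agree: "D (var j) = E (var j)"
  shows "D (var_inv j) = E (var_inv j)"
proof -
  have "var j * D (var_inv j) = var j * E (var_inv j)"
    using derivation_mult[OF D, of "var j" "var_inv j"] derivation_mult[OF E, of "var j" "var_inv j"]
      agree derivation_1[OF D] derivation_1[OF E] by (simp add: var_mult_var_inv add_eq_0_iff)
  then have "var_inv j * (var j * D (var_inv j)) = var_inv j * (var j * E (var_inv j))"
    by simp
  then show ?thesis
    by (simp add: mult.assoc[symmetric] var_mult_var_inv mult.commute[of "var_inv j"])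
qed

lemma derivations_agree_var_power:
  assumes D: "is_derivation D" and E: "is_derivation E" and agree: "D (var j) = E (var j)"
  shows "D (monom (Poly_Mapping.single j k)) = E (monom (Poly_Mapping.single j k))"
proof -
  have agree_step: "D (monom (Poly_Mapping.single j (int n * s))) = E (monom (Poly_Mapping.single j (int n * s)))"
    if "D (monom (Poly_Mapping.single j s)) = E (monom (Poly_Mapping.single j s))" for n s
  proof (induction n)
    case 0
    then show ?case using derivation_1[OF D] derivation_1[OF E] by (simp add: monom_0)
  next
    case (Suc n)
    have "Poly_Mapping.single j (int (Suc n) * s)
        = Poly_Mapping.single j (int n * s) + Poly_Mapping.single j s"
      by (simp add: single_add[symmetric] algebra_simps)
    then show ?case using derivations_agree_monom_add[OF D E Suc that] by simp
  qed
  have "D (monom (Poly_Mapping.single j 1)) = E (monom (Poly_Mapping.single j 1))"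
    and "D (monom (Poly_Mapping.single j (-1))) = E (monom (Poly_Mapping.single j (-1)))"
    using agree derivations_agree_var_inv[OF D E agree] by (simp_all add: var_def var_inv_def)
  from agree_step[OF this(1), of "nat k"] agree_step[OF this(2), of "nat (-k)"]
  show ?thesis by (cases "k \<ge> 0") simp_all
qed

lemma poly_mapping_eq_sum_single_UNIV: "a = (\<Sum>j\<in>UNIV. Poly_Mapping.single j (Poly_Mapping.lookup a j))"
  for a :: "'n::finite \<Rightarrow>\<^sub>0 int"
  by (rule poly_mapping_eq_sum_single) auto

lemma derivation_eqI:
  fixes D E :: "('n::finite, 'k::field) wfield"
  assumes D: "is_derivation D" and E: "is_derivation E" and agree: "\<And>j. D (var j) = E (var j)"
  shows "D = E"
proof
  have agree_finite: "D (monom (\<Sum>j\<in>S. Poly_Mapping.single j (Poly_Mapping.lookup a j)))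
      = E (monom (\<Sum>j\<in>S. Poly_Mapping.single j (Poly_Mapping.lookup a j)))" if "finite S" for S a
    using that
  proof (induction S rule: finite_induct)
    case empty
    then show ?case using derivation_1[OF D] derivation_1[OF E] by (simp add: monom_0)
  next
    case (insert x F)
    then show ?case
      using derivations_agree_monom_add[OF D E derivations_agree_var_power[OF D E agree] insert.IH]
      by simp
  qed
  have agree_monom: "D (monom a) = E (monom a)" for a
    using agree_finite[of UNIV a] poly_mapping_eq_sum_single_UNIV[of a] by simp
  have linear: "F f = (\<Sum>a\<in>Poly_Mapping.keys f. lconst (Poly_Mapping.lookup f a) * F (monom a))"
    if F: "is_derivation F" for F :: "('n, 'k) wfield" and f
  proof -
    have "F f = F (\<Sum>a\<in>Poly_Mapping.keys f. lconst (Poly_Mapping.lookup f a) * monom a)"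
      by (subst poly_mapping_eq_sum_keys) (simp add: single_eq_lconst_mult_monom)
    also have "\<dots> = (\<Sum>a\<in>Poly_Mapping.keys f. lconst (Poly_Mapping.lookup f a) * F (monom a))"
      by (simp only: derivation_sum[OF F] derivation_lconst_mult[OF F])
    finally show ?thesis .
  qed
  show "D f = E f" for f
    unfolding linear[OF D, of f] linear[OF E, of f] agree_monom ..
qed

lemma derivation_eq_vfield:
  fixes D :: "('n::finite, 'k::field) wfield"
  assumes "is_derivation D"
  shows "D = vfield (\<lambda>j. D (var j) * var_inv j)"
  by (rule derivation_eqI[OF assms is_derivation_vfield])
    (simp add: vfield_var mult.assoc mult.commute[of "var_inv _"] var_mult_var_inv)

lemma Witt_eq_range_vfield: "(Witt :: ('n::finite, 'k::field) wfield set) = range vfield"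
  unfolding Witt_def using derivation_eq_vfield is_derivation_vfield by blast

lemma vfield_in_Witt: "vfield u \<in> Witt"
  by (simp add: Witt_def is_derivation_vfield)

definition vfield_bracket :: "('n::finite \<Rightarrow> ('n, 'k::field) laurent)
    \<Rightarrow> ('n \<Rightarrow> ('n, 'k) laurent) \<Rightarrow> 'n \<Rightarrow> ('n, 'k) laurent" where
  "vfield_bracket u v i = (\<Sum>j\<in>UNIV. u j * Hder j (v i) - v j * Hder j (u i))"

lemma vfield_plus: "(\<lambda>f. vfield u f + vfield v f) = vfield (\<lambda>j. u j + v j)"
  by (auto simp: vfield_def distrib_right sum.distrib)

lemma vfield_zero: "(0 :: ('n, 'k::field) wfield) = vfield (\<lambda>j. 0)"
  by (auto simp: vfield_def)

lemma wscale_vfield: "wscale c (vfield u) = vfield (\<lambda>j. lconst c * u j)"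
  by (auto simp: vfield_def wscale_def sum_distrib_left mult.assoc)

lemma lie_vfield: "lie (vfield u) (vfield v) = vfield (vfield_bracket u v)"
proof
  fix f
  have expand: "vfield u (vfield v f)
      = (\<Sum>j\<in>UNIV. \<Sum>i\<in>UNIV. u j * v i * Hder j (Hder i f))
      + (\<Sum>i\<in>UNIV. (\<Sum>j\<in>UNIV. u j * Hder j (v i)) * Hder i f)" for u v :: "'a \<Rightarrow> ('a, 'b) laurent"
  proof -
    have "vfield u (vfield v f) = (\<Sum>j\<in>UNIV. \<Sum>i\<in>UNIV.
        u j * v i * Hder j (Hder i f) + u j * Hder j (v i) * Hder i f)"
      by (simp add: vfield_def Hder_sum Hder_mult sum_distrib_left algebra_simps)
    also have "\<dots> = (\<Sum>j\<in>UNIV. \<Sum>i\<in>UNIV. u j * v i * Hder j (Hder i f))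
        + (\<Sum>j\<in>UNIV. \<Sum>i\<in>UNIV. u j * Hder j (v i) * Hder i f)"
      by (simp add: sum.distrib)
    also have "(\<Sum>j\<in>UNIV. \<Sum>i\<in>UNIV. u j * Hder j (v i) * Hder i f)
        = (\<Sum>i\<in>UNIV. (\<Sum>j\<in>UNIV. u j * Hder j (v i)) * Hder i f)"
      by (subst sum.swap) (simp add: sum_distrib_right)
    finally show ?thesis .
  qed
  have second_order_symmetric: "(\<Sum>j\<in>UNIV. \<Sum>i\<in>UNIV. u j * v i * Hder j (Hder i f))
      = (\<Sum>j\<in>UNIV. \<Sum>i\<in>UNIV. v j * u i * Hder j (Hder i f))"
    by (subst sum.swap) (simp add: Hder_commute mult.commute)
  have "lie (vfield u) (vfield v) f
      = (\<Sum>i\<in>UNIV. (\<Sum>j\<in>UNIV. u j * Hder j (v i)) * Hder i f)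
      - (\<Sum>i\<in>UNIV. (\<Sum>j\<in>UNIV. v j * Hder j (u i)) * Hder i f)"
    unfolding lie_def expand[of u v] expand[of v u] second_order_symmetric by simp
  also have "\<dots> = vfield (vfield_bracket u v) f"
    unfolding vfield_def vfield_bracket_def sum_subtractf[symmetric]
    by (rule sum.cong) (simp_all add: sum_subtractf left_diff_distrib sum_distrib_right)
  finally show "lie (vfield u) (vfield v) f = vfield (vfield_bracket u v) f" .
qed

lemma lie_vfield_iterate:
  "(lie (vfield u) ^^ k) (vfield v) = vfield ((vfield_bracket u ^^ k) v)"
  by (induction k) (simp_all add: lie_vfield)

lemma sum_wscale_vfield:
  "(\<Sum>i\<in>A. wscale (c i) (vfield (g i))) = vfield (\<lambda>j. \<Sum>i\<in>A. lconst (c i) * g i j)"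
proof (induction A rule: infinite_finite_induct)
  case (infinite A)
  then show ?case by (simp only: sum.infinite[OF infinite] vfield_zero[symmetric])
next
  case empty
  then show ?case by (simp only: sum.empty vfield_zero[symmetric])
next
  case (insert x F)
  then show ?case by (simp add: wscale_vfield plus_fun_def vfield_plus sum.distrib)
qed

subsection \<open>Locally finite elements of the Witt algebra\<close>

definition wspan :: "('n, 'k::field) wfield set \<Rightarrow> ('n, 'k) wfield set" where
  "wspan G = range (\<lambda>c. \<Sum>g\<in>G. wscale (c g) g)"

definition ad_locally_finite :: "('n::finite, 'k::field) wfield \<Rightarrow> bool" where
  "ad_locally_finite D \<longleftrightarrow> D \<in> Witt \<and> (\<forall>E\<in>Witt. \<exists>G. finite G \<and> G \<subseteq> Witt \<and>
      (\<forall>k. (lie D ^^ k) E \<in> wspan G))"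

lemma ad_locally_finite_orbit:
  "ad_locally_finite D \<Longrightarrow> E \<in> Witt \<Longrightarrow> \<exists>G. finite G \<and> G \<subseteq> Witt \<and> (\<forall>k. (lie D ^^ k) E \<in> wspan G)"
  unfolding ad_locally_finite_def by blast

lemma lconst_sum: "lconst (sum c A) = (\<Sum>a\<in>A. lconst (c a))"
  by (induction A rule: infinite_finite_induct) (simp_all add: lconst_def single_add)

lemma wscale_sum: "wscale (sum c A) D = (\<Sum>a\<in>A. wscale (c a) D)"
  by (rule ext) (simp add: wscale_def lconst_sum sum_fun_apply sum_distrib_right)

lemma sum_wscale_in_wspan:
  assumes "finite I" "finite G" "\<And>i. i \<in> I \<Longrightarrow> g i \<in> G"
  shows "(\<Sum>i\<in>I. wscale (c i) (g i)) \<in> wspan G"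
proof -
  have "(\<Sum>i\<in>I. wscale (c i) (g i))
      = (\<Sum>x\<in>G. \<Sum>i\<in>{i \<in> I. g i = x}. wscale (c i) (g i))"
    by (rule sum.group[symmetric]) (use assms in auto)
  also have "\<dots> = (\<Sum>x\<in>G. \<Sum>i\<in>{i \<in> I. g i = x}. wscale (c i) x)"
    by (intro sum.cong) auto
  also have "\<dots> = (\<Sum>x\<in>G. wscale (\<Sum>i\<in>{i \<in> I. g i = x}. c i) x)"
    by (simp add: wscale_sum)
  finally show ?thesis
    unfolding wspan_def by (rule range_eqI[where x = "\<lambda>x. \<Sum>i\<in>{i \<in> I. g i = x}. c i"])
qed

lemma zero_in_Witt: "(0 :: ('n::finite, 'k::field) wfield) \<in> Witt"
  by (subst vfield_zero) (rule vfield_in_Witt)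

lemma Witt_add: "D \<in> Witt \<Longrightarrow> E \<in> Witt \<Longrightarrow> (D + E :: ('n::finite, 'k::field) wfield) \<in> Witt"
  unfolding Witt_eq_range_vfield plus_fun_def by (auto simp: vfield_plus)

lemma Witt_wscale: "D \<in> Witt \<Longrightarrow> wscale c (D :: ('n::finite, 'k::field) wfield) \<in> Witt"
  unfolding Witt_eq_range_vfield by (auto simp: wscale_vfield)

lemma Witt_lie: "D \<in> Witt \<Longrightarrow> E \<in> Witt \<Longrightarrow> lie D (E :: ('n::finite, 'k::field) wfield) \<in> Witt"
  unfolding Witt_eq_range_vfield by (auto simp: lie_vfield)

lemma Witt_lie_iterate:
  "D \<in> Witt \<Longrightarrow> E \<in> Witt \<Longrightarrow> (lie D ^^ k) (E :: ('n::finite, 'k::field) wfield) \<in> Witt"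
  by (induction k) (auto simp: Witt_lie)

lemma Witt_sum_wscale:
  "G \<subseteq> Witt \<Longrightarrow> (\<Sum>g\<in>G. wscale (c g) g :: ('n::finite, 'k::field) wfield) \<in> Witt"
  by (induction G rule: infinite_finite_induct) (auto simp: zero_in_Witt Witt_add Witt_wscale)

context
  fixes \<sigma> :: "('n::finite, 'k::field) wfield \<Rightarrow> ('n, 'k) wfield"
  assumes aut: "witt_aut \<sigma>"
begin

lemma aut_in_Witt: "D \<in> Witt \<Longrightarrow> \<sigma> D \<in> Witt"
  using aut unfolding witt_aut_def bij_betw_def by blast

lemma aut_inj: "inj_on \<sigma> Witt"
  using aut unfolding witt_aut_def bij_betw_def by blast

lemma aut_image: "\<sigma> ` Witt = Witt"
  using aut unfolding witt_aut_def bij_betw_def by blast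

lemma aut_add: "D \<in> Witt \<Longrightarrow> E \<in> Witt \<Longrightarrow> \<sigma> (D + E) = \<sigma> D + \<sigma> E"
  using aut unfolding witt_aut_def plus_fun_def by blast

lemma aut_wscale: "D \<in> Witt \<Longrightarrow> \<sigma> (wscale c D) = wscale c (\<sigma> D)"
  using aut unfolding witt_aut_def by blast

lemma aut_lie: "D \<in> Witt \<Longrightarrow> E \<in> Witt \<Longrightarrow> \<sigma> (lie D E) = lie (\<sigma> D) (\<sigma> E)"
  using aut unfolding witt_aut_def by blast

lemma aut_lie_iterate: "D \<in> Witt \<Longrightarrow> E \<in> Witt \<Longrightarrow> \<sigma> ((lie D ^^ k) E) = (lie (\<sigma> D) ^^ k) (\<sigma> E)"
  by (induction k) (simp_all add: aut_lie Witt_lie_iterate)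

lemma aut_zero: "\<sigma> 0 = 0"
proof -
  have "\<sigma> (0 + 0) = \<sigma> 0 + \<sigma> 0"
    by (rule aut_add[OF zero_in_Witt zero_in_Witt])
  then show ?thesis by simp
qed

lemma aut_sum_wscale: "G \<subseteq> Witt \<Longrightarrow> \<sigma> (\<Sum>g\<in>G. wscale (c g) g) = (\<Sum>g\<in>G. wscale (c g) (\<sigma> g))"
proof (induction G rule: infinite_finite_induct)
  case (insert x F)
  then have Witt: "wscale (c x) x \<in> Witt" "(\<Sum>g\<in>F. wscale (c g) g) \<in> Witt"
    by (simp_all add: Witt_wscale Witt_sum_wscale)
  have "\<sigma> (\<Sum>g\<in>insert x F. wscale (c g) g) = \<sigma> (wscale (c x) x + (\<Sum>g\<in>F. wscale (c g) g))"
    by (simp only: sum.insert[OF insert.hyps])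
  also have "\<dots> = \<sigma> (wscale (c x) x) + \<sigma> (\<Sum>g\<in>F. wscale (c g) g)"
    by (rule aut_add[OF Witt])
  also have "\<dots> = wscale (c x) (\<sigma> x) + (\<Sum>g\<in>F. wscale (c g) (\<sigma> g))"
    using insert.prems insert.IH by (simp only: aut_wscale insert_subset)
  also have "\<dots> = (\<Sum>g\<in>insert x F. wscale (c g) (\<sigma> g))"
    by (simp only: sum.insert[OF insert.hyps])
  finally show ?case .
qed (simp_all add: aut_zero)

lemma aut_wspan_iff:
  assumes G: "finite G" "G \<subseteq> Witt" and X: "X \<in> Witt"
  shows "\<sigma> X \<in> wspan (\<sigma> ` G) \<longleftrightarrow> X \<in> wspan G"
proof -
  have inj: "inj_on \<sigma> G" using aut_inj G inj_on_subset by blast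
  have image_sum: "(\<Sum>y\<in>\<sigma> ` G. wscale (d y) y) = \<sigma> (\<Sum>g\<in>G. wscale (d (\<sigma> g)) g)" for d
    by (simp add: sum.reindex[OF inj] aut_sum_wscale[OF G(2)])
  show ?thesis
  proof
    assume "\<sigma> X \<in> wspan (\<sigma> ` G)"
    then obtain d where "\<sigma> X = (\<Sum>y\<in>\<sigma> ` G. wscale (d y) y)"
      unfolding wspan_def by blast
    also have "\<dots> = \<sigma> (\<Sum>g\<in>G. wscale (d (\<sigma> g)) g)"
      by (rule image_sum)
    finally have "X = (\<Sum>g\<in>G. wscale (d (\<sigma> g)) g)"
      by (rule inj_onD[OF aut_inj _ X Witt_sum_wscale[OF G(2)]])
    then show "X \<in> wspan G"
      unfolding wspan_def by (rule range_eqI[where x = "\<lambda>g. d (\<sigma> g)"])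
  next
    assume "X \<in> wspan G"
    then obtain c where X_eq: "X = (\<Sum>g\<in>G. wscale (c g) g)"
      unfolding wspan_def by blast
    have "\<sigma> X = \<sigma> (\<Sum>g\<in>G. wscale (c (the_inv_into G \<sigma> (\<sigma> g))) g)"
      unfolding X_eq by (intro arg_cong[where f = \<sigma>] sum.cong refl) (simp add: the_inv_into_f_f[OF inj])
    also have "\<dots> = (\<Sum>y\<in>\<sigma> ` G. wscale (c (the_inv_into G \<sigma> y)) y)"
      by (rule image_sum[symmetric])
    finally show "\<sigma> X \<in> wspan (\<sigma> ` G)"
      unfolding wspan_def by (rule range_eqI[where x = "\<lambda>y. c (the_inv_into G \<sigma> y)"])
  qed
qed

lemma ad_locally_finite_aut_iff:
  assumes D: "D \<in> Witt"
  shows "ad_locally_finite (\<sigma> D) \<longleftrightarrow> ad_locally_finite D"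
proof
  assume lf: "ad_locally_finite (\<sigma> D)"
  show "ad_locally_finite D"
    unfolding ad_locally_finite_def
  proof (intro conjI ballI D)
    fix E :: "('n, 'k) wfield" assume E: "E \<in> Witt"
    obtain G' where G': "finite G'" "G' \<subseteq> Witt" "\<And>k. (lie (\<sigma> D) ^^ k) (\<sigma> E) \<in> wspan G'"
      using ad_locally_finite_orbit[OF lf aut_in_Witt[OF E]] by blast
    define G where "G = {g \<in> Witt. \<sigma> g \<in> G'}"
    have "G \<subseteq> Witt" unfolding G_def by blast
    have image: "\<sigma> ` G = G'"
    proof
      show "\<sigma> ` G \<subseteq> G'" unfolding G_def by blast
      show "G' \<subseteq> \<sigma> ` G"
      proof
        fix y assume "y \<in> G'"
        then obtain g where "g \<in> Witt" "y = \<sigma> g" using G'(2) aut_image by blast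
        then show "y \<in> \<sigma> ` G" using \<open>y \<in> G'\<close> unfolding G_def by blast
      qed
    qed
    moreover have "finite G"
      by (rule finite_imageD[where f = \<sigma>])
        (simp_all add: image G'(1) inj_on_subset[OF aut_inj \<open>G \<subseteq> Witt\<close>])
    moreover have "(lie D ^^ k) E \<in> wspan G" for k
      using G'(3)[of k] aut_wspan_iff[OF \<open>finite G\<close> \<open>G \<subseteq> Witt\<close> Witt_lie_iterate[OF D E]]
      by (simp add: aut_lie_iterate[OF D E] image)
    ultimately show "\<exists>G. finite G \<and> G \<subseteq> Witt \<and> (\<forall>k. (lie D ^^ k) E \<in> wspan G)"
      using \<open>G \<subseteq> Witt\<close> by blast
  qed
next
  assume lf: "ad_locally_finite D"
  show "ad_locally_finite (\<sigma> D)"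
    unfolding ad_locally_finite_def
  proof (intro conjI ballI aut_in_Witt[OF D])
    fix E' :: "('n, 'k) wfield" assume "E' \<in> Witt"
    then obtain E where E: "E \<in> Witt" "E' = \<sigma> E" using aut_image by blast
    obtain G where G: "finite G" "G \<subseteq> Witt" "\<And>k. (lie D ^^ k) E \<in> wspan G"
      using ad_locally_finite_orbit[OF lf E(1)] by blast
    have "(lie (\<sigma> D) ^^ k) E' \<in> wspan (\<sigma> ` G)" for k
      using G(3)[of k] aut_wspan_iff[OF G(1,2) Witt_lie_iterate[OF D E(1)]]
      by (simp add: aut_lie_iterate[OF D E(1)] E(2))
    moreover have "\<sigma> ` G \<subseteq> Witt" using G(2) aut_in_Witt by blast
    ultimately show "\<exists>G'. finite G' \<and> G' \<subseteq> Witt \<and> (\<forall>k. (lie (\<sigma> D) ^^ k) E' \<in> wspan G')"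
      using G(1) by blast
  qed
qed

end

definition exponents :: "('n \<Rightarrow> ('n, 'k::field) laurent) \<Rightarrow> ('n \<Rightarrow>\<^sub>0 int) set" where
  "exponents u = (\<Union>j. Poly_Mapping.keys (u j))"

definition mon_field :: "('n \<Rightarrow>\<^sub>0 int) \<Rightarrow> ('n \<Rightarrow> 'k::field) \<Rightarrow> 'n \<Rightarrow> ('n, 'k) laurent" where
  "mon_field a h = (\<lambda>j. Poly_Mapping.single a (h j))"

lemma finite_exponents: "finite (exponents (u :: 'n::finite \<Rightarrow> ('n, 'k::field) laurent))"
  by (simp add: exponents_def)

lemma exponents_mon_field: "exponents (mon_field a h) \<subseteq> {a}"
  by (auto simp: exponents_def mon_field_def split: if_splits)

lemma exponents_remove_exp: "exponents (\<lambda>j. u j - Poly_Mapping.single a (Poly_Mapping.lookup (u j) a)) \<subseteq> exponents u - {a}"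
  by (auto simp: exponents_def in_keys_iff lookup_minus Poly_Mapping.lookup_single when_def split: if_splits)

lemma exponents_sum_lconst_mult:
  "exponents (\<lambda>j. \<Sum>i\<in>I. lconst (c i) * g i j) \<subseteq> (\<Union>i\<in>I. exponents (g i))"
proof
  fix e assume "e \<in> exponents (\<lambda>j. \<Sum>i\<in>I. lconst (c i) * g i j)"
  then obtain j where "e \<in> Poly_Mapping.keys (\<Sum>i\<in>I. lconst (c i) * g i j)"
    unfolding exponents_def by blast
  then obtain i where "i \<in> I" "e \<in> Poly_Mapping.keys (lconst (c i) * g i j)"
    using keys_sum by fast
  then have "i \<in> I" "e \<in> Poly_Mapping.keys (g i j)"
    using keys_lconst_mult by fast+
  then show "e \<in> (\<Union>i\<in>I. exponents (g i))"
    unfolding exponents_def by blast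
qed

lemma keys_mult_Hder:
  assumes "e \<in> Poly_Mapping.keys (f * Hder j g)"
  shows "\<exists>a\<in>Poly_Mapping.keys f. \<exists>c\<in>Poly_Mapping.keys g. e = a + c"
proof -
  obtain a c where "a \<in> Poly_Mapping.keys f" "c \<in> Poly_Mapping.keys (Hder j g)" "e = a + c"
    using subsetD[OF keys_mult assms] by blast
  moreover from this(2) have "c \<in> Poly_Mapping.keys g" by (rule subsetD[OF keys_Hder])
  ultimately show ?thesis by blast
qed

lemma keys_vfield_bracket:
  assumes "e \<in> Poly_Mapping.keys (vfield_bracket u w i)"
  shows "\<exists>a\<in>exponents u. \<exists>c\<in>exponents w. e = a + c"
proof -
  obtain j where "e \<in> Poly_Mapping.keys (u j * Hder j (w i) - w j * Hder j (u i))"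
    using assms keys_sum unfolding vfield_bracket_def by fast
  then consider "e \<in> Poly_Mapping.keys (u j * Hder j (w i))" | "e \<in> Poly_Mapping.keys (w j * Hder j (u i))"
    using keys_diff by fast
  then show ?thesis
  proof cases
    case 1
    from keys_mult_Hder[OF 1] obtain a c
      where "a \<in> Poly_Mapping.keys (u j)" "c \<in> Poly_Mapping.keys (w i)" "e = a + c" by blast
    moreover from this have "a \<in> exponents u" "c \<in> exponents w" unfolding exponents_def by blast+
    ultimately show ?thesis by blast
  next
    case 2
    from keys_mult_Hder[OF 2] obtain a c
      where "c \<in> Poly_Mapping.keys (w j)" "a \<in> Poly_Mapping.keys (u i)" "e = c + a" by blast
    moreover from this have "a \<in> exponents u" "c \<in> exponents w" unfolding exponents_def by blast+
    ultimately show ?thesis by (metis add.commute)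
  qed
qed
lemma vfield_bracket_add_left:
  "vfield_bracket (\<lambda>j. u j + u' j) w i = vfield_bracket u w i + vfield_bracket u' w i"
  unfolding vfield_bracket_def sum.distrib[symmetric]
  by (rule sum.cong) (simp_all add: Hder_add algebra_simps)

lemma vfield_bracket_add_right:
  "vfield_bracket u (\<lambda>j. w j + w' j) i = vfield_bracket u w i + vfield_bracket u w' i"
  unfolding vfield_bracket_def sum.distrib[symmetric]
  by (rule sum.cong) (simp_all add: Hder_add algebra_simps)

lemma sum_single: "(\<Sum>j\<in>A. Poly_Mapping.single a (f j)) = Poly_Mapping.single a (\<Sum>j\<in>A. f j)"
  by (rule poly_mapping_eqI) (simp add: lookup_sum Poly_Mapping.lookup_single when_def)

definition pairing :: "('n::finite \<Rightarrow> 'k::field) \<Rightarrow> ('n \<Rightarrow>\<^sub>0 int) \<Rightarrow> 'k" where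
  "pairing h a = (\<Sum>i\<in>UNIV. h i * of_int (Poly_Mapping.lookup a i))"

lemma pairing_add: "pairing h (a + b) = pairing h a + pairing h b"
  by (simp add: pairing_def lookup_add distrib_left sum.distrib)

lemma pairing_single_one: "pairing h (Poly_Mapping.single j 1) = h j"
proof -
  have "pairing h (Poly_Mapping.single j 1) = (\<Sum>i\<in>UNIV. if i = j then h j else 0)"
    unfolding pairing_def by (rule sum.cong) (auto simp: Poly_Mapping.lookup_single when_def)
  then show ?thesis by simp
qed

lemma vfield_bracket_mon_field:
  "vfield_bracket (mon_field a h) (mon_field c g) i
    = Poly_Mapping.single (a + c) (pairing h c * g i - pairing g a * h i)"
proof -
  have "vfield_bracket (mon_field a h) (mon_field c g) i = (\<Sum>j\<in>UNIV. Poly_Mapping.single (a + c)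
      (h j * (of_int (Poly_Mapping.lookup c j) * g i) - g j * (of_int (Poly_Mapping.lookup a j) * h i)))"
    unfolding vfield_bracket_def mon_field_def Hder_single
    by (rule sum.cong) (simp_all add: mult_single single_diff add.commute)
  also have "\<dots> = Poly_Mapping.single (a + c) (pairing h c * g i - pairing g a * h i)"
    by (simp add: sum_single pairing_def sum_subtractf sum_distrib_left mult_ac)
  finally show ?thesis .
qed

subsection \<open>Elements of the Cartan subalgebra are locally finite\<close>

lemma Cartan_eq_range_vfield: "(Cartan :: ('n::finite, 'k::field) wfield set) = range (\<lambda>c. vfield (\<lambda>i. lconst (c i)))"
proof -
  have "(\<lambda>f. \<Sum>i\<in>UNIV. wscale (c i) (Hder i) f) = vfield (\<lambda>i. lconst (c i))" for c :: "'n \<Rightarrow> 'k"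
    by (rule ext) (simp add: vfield_def wscale_def)
  then show ?thesis unfolding Cartan_def by auto
qed

lemma Cartan_subset_Witt: "(Cartan :: ('n::finite, 'k::field) wfield set) \<subseteq> Witt"
  unfolding Cartan_eq_range_vfield by (auto simp: vfield_in_Witt)

lemma vfield_bracket_lconst:
  "vfield_bracket (\<lambda>i. lconst (c i)) v = (\<lambda>j. diag_op (pairing c) (v j))"
proof (intro ext poly_mapping_eqI)
  fix j a
  have "vfield_bracket (\<lambda>i. lconst (c i)) v j = (\<Sum>i\<in>UNIV. lconst (c i) * Hder i (v j))"
    by (simp add: vfield_bracket_def)
  then show "Poly_Mapping.lookup (vfield_bracket (\<lambda>i. lconst (c i)) v j) a
      = Poly_Mapping.lookup (diag_op (pairing c) (v j)) a"
    by (simp add: lookup_sum Hder_eq_diag_op pairing_def sum_distrib_left mult_ac)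
qed

lemma vfield_bracket_lconst_iterate:
  "(vfield_bracket (\<lambda>i. lconst (c i)) ^^ k) v = (\<lambda>j. diag_op (\<lambda>a. pairing c a ^ k) (v j))"
proof (induction k)
  case 0
  have "diag_op (\<lambda>a. 1) f = f" for f :: "('a, 'b) laurent"
    by (rule poly_mapping_eqI) simp
  then show ?case by simp
next
  case (Suc k)
  then show ?case by (simp add: vfield_bracket_lconst diag_op_comp mult.commute)
qed

definition unit_vfield :: "'n::finite \<Rightarrow> ('n \<Rightarrow>\<^sub>0 int) \<Rightarrow> ('n, 'k::field) wfield" where
  "unit_vfield j a = vfield (mon_field a (\<lambda>i. if i = j then 1 else 0))"

lemma vfield_eq_sum_unit_vfield:
  fixes w :: "'n::finite \<Rightarrow> ('n, 'k::field) laurent"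
  assumes "\<And>j. finite (A j)" "\<And>j. Poly_Mapping.keys (w j) \<subseteq> A j"
  shows "vfield w = (\<Sum>(j, a)\<in>Sigma UNIV A. wscale (Poly_Mapping.lookup (w j) a) (unit_vfield j a))"
proof -
  define c where "c p = Poly_Mapping.lookup (w (fst p)) (snd p)" for p
  define g :: "'n \<times> ('n \<Rightarrow>\<^sub>0 int) \<Rightarrow> 'n \<Rightarrow> ('n, 'k) laurent"
    where "g p = mon_field (snd p) (\<lambda>i. if i = fst p then 1 else 0)" for p
  have "(\<Sum>p\<in>Sigma UNIV A. lconst (c p) * g p i) = w i" for i
  proof -
    have "(\<Sum>p\<in>Sigma UNIV A. lconst (c p) * g p i) = (\<Sum>j\<in>UNIV. \<Sum>a\<in>A j. lconst (c (j, a)) * g (j, a) i)"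
      by (simp add: sum.Sigma assms case_prod_unfold)
    also have "\<dots> = (\<Sum>j\<in>UNIV. if i = j then \<Sum>a\<in>A j. Poly_Mapping.single a (Poly_Mapping.lookup (w j) a) else 0)"
      by (intro sum.cong refl) (simp add: c_def g_def mon_field_def lconst_def mult_single)
    also have "\<dots> = (\<Sum>a\<in>A i. Poly_Mapping.single a (Poly_Mapping.lookup (w i) a))"
      by simp
    also have "\<dots> = w i"
      using assms by (rule poly_mapping_eq_sum_single[symmetric])
    finally show ?thesis .
  qed
  then have "vfield w = (\<Sum>p\<in>Sigma UNIV A. wscale (c p) (vfield (g p)))"
    by (simp add: sum_wscale_vfield)
  then show ?thesis
    by (simp add: c_def g_def unit_vfield_def case_prod_unfold)
qed

lemma Cartan_imp_ad_locally_finite: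
  fixes D :: "('n::finite, 'k::field) wfield"
  assumes "D \<in> Cartan"
  shows "ad_locally_finite D"
  unfolding ad_locally_finite_def
proof (intro conjI ballI)
  obtain c where D: "D = vfield (\<lambda>i. lconst (c i))"
    using assms Cartan_eq_range_vfield by blast
  then show "D \<in> Witt" by (simp add: vfield_in_Witt)
  fix E :: "('n, 'k) wfield" assume "E \<in> Witt"
  then obtain v where E: "E = vfield v" using Witt_eq_range_vfield by blast
  define P where "P = Sigma UNIV (\<lambda>j. Poly_Mapping.keys (v j))"
  define G :: "('n, 'k) wfield set" where "G = (\<lambda>(j, a). unit_vfield j a) ` P"
  have "finite P" unfolding P_def by auto
  have "(lie D ^^ k) E \<in> wspan G" for k
  proof -
    have "(lie D ^^ k) E = vfield (\<lambda>j. diag_op (\<lambda>a. pairing c a ^ k) (v j))"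
      unfolding D E lie_vfield_iterate vfield_bracket_lconst_iterate ..
    also have "\<dots> = (\<Sum>(j, a)\<in>P.
        wscale (Poly_Mapping.lookup (diag_op (\<lambda>a. pairing c a ^ k) (v j)) a) (unit_vfield j a))"
      unfolding P_def by (rule vfield_eq_sum_unit_vfield) (use keys_diag_op in auto)
    also have "\<dots> \<in> wspan G"
      unfolding G_def case_prod_unfold by (rule sum_wscale_in_wspan) (use \<open>finite P\<close> in auto)
    finally show ?thesis .
  qed
  moreover have "G \<subseteq> Witt" unfolding G_def unit_vfield_def by (auto simp: vfield_in_Witt)
  ultimately show "\<exists>G. finite G \<and> G \<subseteq> Witt \<and> (\<forall>k. (lie D ^^ k) E \<in> wspan G)"
    using \<open>finite P\<close> G_def by blast
qed

subsection \<open>Dominant exponents\<close>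

definition dominant_exp :: "(('n \<Rightarrow>\<^sub>0 int) \<Rightarrow> 'g::ord) \<Rightarrow> ('n \<Rightarrow>\<^sub>0 int)
    \<Rightarrow> ('n \<Rightarrow> ('n, 'k::field) laurent) \<Rightarrow> bool" where
  "dominant_exp \<phi> c u \<longleftrightarrow> (\<forall>a\<in>exponents u. a \<noteq> c \<longrightarrow> \<phi> a < \<phi> c)"

lemma exists_inj_additive_ordered:
  "\<exists>\<phi> :: ('n::finite \<Rightarrow>\<^sub>0 int) \<Rightarrow> (nat \<Rightarrow>\<^sub>0 int). inj \<phi> \<and> (\<forall>a b. \<phi> (a + b) = \<phi> a + \<phi> b)"
proof -
  obtain \<iota> :: "'n \<Rightarrow> nat" where "inj \<iota>"
    using finite_imp_inj_to_nat_seg[of "UNIV :: 'n set"] by auto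
  define \<phi> where "\<phi> a = (\<Sum>j\<in>UNIV. Poly_Mapping.single (\<iota> j) (Poly_Mapping.lookup a j))"
    for a :: "'n \<Rightarrow>\<^sub>0 int"
  have lookup_\<phi>: "Poly_Mapping.lookup (\<phi> a) (\<iota> j) = Poly_Mapping.lookup a j" for a j
  proof -
    have "Poly_Mapping.lookup (\<phi> a) (\<iota> j) = (\<Sum>j'\<in>UNIV. if j' = j then Poly_Mapping.lookup a j' else 0)"
      unfolding \<phi>_def lookup_sum
      by (rule sum.cong) (auto simp: Poly_Mapping.lookup_single when_def inj_eq[OF \<open>inj \<iota>\<close>])
    then show ?thesis by simp
  qed
  have "inj \<phi>"
    by (rule injI, rule poly_mapping_eqI) (metis lookup_\<phi>)
  moreover have "\<phi> (a + b) = \<phi> a + \<phi> b" for a b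
    unfolding \<phi>_def by (simp add: lookup_add single_add sum.distrib)
  ultimately show ?thesis by blast
qed

lemma exists_dominant_exp:
  fixes \<phi> :: "('n \<Rightarrow>\<^sub>0 int) \<Rightarrow> 'g::linorder"
  assumes "inj \<phi>" "finite (exponents u)" "exponents u \<noteq> {}"
  shows "\<exists>m\<in>exponents u. dominant_exp \<phi> m u"
proof -
  have "Max (\<phi> ` exponents u) \<in> \<phi> ` exponents u" using assms(2,3) by simp
  then obtain m where m: "m \<in> exponents u" "\<phi> m = Max (\<phi> ` exponents u)" by (metis imageE)
  have "\<phi> a < \<phi> m" if "a \<in> exponents u" "a \<noteq> m" for a
  proof -
    have "\<phi> a \<le> \<phi> m" using m(2) that(1) assms(2) by simp
    moreover have "\<phi> a \<noteq> \<phi> m" using inj_eq[OF assms(1)] that(2) by blast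
    ultimately show ?thesis by simp
  qed
  then show ?thesis using m(1) unfolding dominant_exp_def by blast
qed

lemma dominant_exp_add_less:
  fixes \<phi> :: "('n \<Rightarrow>\<^sub>0 int) \<Rightarrow> 'g::ordered_cancel_ab_semigroup_add"
  assumes add: "\<And>a b. \<phi> (a + b) = \<phi> a + \<phi> b"
    and dom_u: "dominant_exp \<phi> m u" and dom_w: "dominant_exp \<phi> c w"
    and "a \<in> exponents u" "c' \<in> exponents w" "a \<noteq> m \<or> c' \<noteq> c"
  shows "\<phi> (a + c') < \<phi> (m + c)"
proof -
  have a: "a \<noteq> m \<Longrightarrow> \<phi> a < \<phi> m" "\<phi> a \<le> \<phi> m"
    using dom_u \<open>a \<in> exponents u\<close> unfolding dominant_exp_def by (auto intro: less_imp_le)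
  have c': "c' \<noteq> c \<Longrightarrow> \<phi> c' < \<phi> c" "\<phi> c' \<le> \<phi> c"
    using dom_w \<open>c' \<in> exponents w\<close> unfolding dominant_exp_def by (auto intro: less_imp_le)
  from \<open>a \<noteq> m \<or> c' \<noteq> c\<close> have "\<phi> a + \<phi> c' < \<phi> m + \<phi> c"
    using a c' by (auto intro: add_less_le_mono add_le_less_mono)
  then show ?thesis by (simp add: add)
qed

lemma dominant_exp_bracket:
  fixes \<phi> :: "('n::finite \<Rightarrow>\<^sub>0 int) \<Rightarrow> 'g::ordered_cancel_ab_semigroup_add"
  assumes add: "\<And>a b. \<phi> (a + b) = \<phi> a + \<phi> b"
    and dom_u: "dominant_exp \<phi> m u" and dom_w: "dominant_exp \<phi> c w"
  shows "dominant_exp \<phi> (m + c) (vfield_bracket u w)"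
  unfolding dominant_exp_def
proof (intro ballI impI)
  fix e assume "e \<in> exponents (vfield_bracket u w)" "e \<noteq> m + c"
  then obtain i where "e \<in> Poly_Mapping.keys (vfield_bracket u w i)"
    unfolding exponents_def by blast
  then obtain a c' where "a \<in> exponents u" "c' \<in> exponents w" "e = a + c'"
    using keys_vfield_bracket by blast
  moreover from this have "a \<noteq> m \<or> c' \<noteq> c" using \<open>e \<noteq> m + c\<close> by blast
  ultimately show "\<phi> e < \<phi> (m + c)"
    using dominant_exp_add_less[OF add dom_u dom_w] by blast
qed

text \<open>At the sum of two dominant exponents, only the two leading monomial fields contribute to
  the bracket.\<close>

lemma lookup_vfield_bracket_dominant:
  fixes \<phi> :: "('n::finite \<Rightarrow>\<^sub>0 int) \<Rightarrow> 'g::ordered_cancel_ab_semigroup_add"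
  assumes add: "\<And>a b. \<phi> (a + b) = \<phi> a + \<phi> b"
    and dom_u: "dominant_exp \<phi> m u" and dom_w: "dominant_exp \<phi> c w"
    and h: "\<And>j. Poly_Mapping.lookup (u j) m = h j"
    and lead_w: "\<And>j. Poly_Mapping.lookup (w j) c = l * h j"
  shows "Poly_Mapping.lookup (vfield_bracket u w i) (m + c) = l * (pairing h c - pairing h m) * h i"
proof -
  define u' where "u' j = u j - Poly_Mapping.single m (h j)" for j
  define w' where "w' j = w j - Poly_Mapping.single c (l * h j)" for j
  define lead where "lead = mon_field c (\<lambda>j. l * h j)"
  have exponents_u': "exponents u' \<subseteq> exponents u - {m}"
    unfolding u'_def h[symmetric] by (rule exponents_remove_exp)
  have exponents_w': "exponents w' \<subseteq> exponents w - {c}"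
    unfolding w'_def lead_w[symmetric] by (rule exponents_remove_exp)
  have vanish: "Poly_Mapping.lookup (vfield_bracket x y i) (m + c) = 0"
    if "\<And>a c'. a \<in> exponents x \<Longrightarrow> c' \<in> exponents y \<Longrightarrow> a + c' \<noteq> m + c" for x y
  proof (rule ccontr)
    assume "Poly_Mapping.lookup (vfield_bracket x y i) (m + c) \<noteq> 0"
    then obtain a c' where "a \<in> exponents x" "c' \<in> exponents y" "m + c = a + c'"
      using keys_vfield_bracket[of "m + c" x y i] by (auto simp: in_keys_iff)
    then show False using that by metis
  qed
  have "vfield_bracket u w i = vfield_bracket u' w i + vfield_bracket (mon_field m h) w i"
    by (subst vfield_bracket_add_left[symmetric]) (simp add: u'_def mon_field_def)
  also have "vfield_bracket (mon_field m h) w i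
      = vfield_bracket (mon_field m h) w' i + vfield_bracket (mon_field m h) lead i"
    by (subst vfield_bracket_add_right[symmetric]) (simp add: w'_def lead_def mon_field_def)
  finally have "vfield_bracket u w i = vfield_bracket u' w i
      + (vfield_bracket (mon_field m h) w' i + vfield_bracket (mon_field m h) lead i)" .
  moreover have "Poly_Mapping.lookup (vfield_bracket u' w i) (m + c) = 0"
  proof (rule vanish)
    fix a c' assume "a \<in> exponents u'" and c': "c' \<in> exponents w"
    then have "a \<in> exponents u" "a \<noteq> m" using exponents_u' by blast+
    then have "\<phi> (a + c') < \<phi> (m + c)"
      using dominant_exp_add_less[OF add dom_u dom_w _ c'] by blast
    then show "a + c' \<noteq> m + c" by auto
  qed
  moreover have "Poly_Mapping.lookup (vfield_bracket (mon_field m h) w' i) (m + c) = 0"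
  proof (rule vanish)
    fix a c' assume a: "a \<in> exponents (mon_field m h)" and "c' \<in> exponents w'"
    then have "c' \<in> exponents w" "c' \<noteq> c" using exponents_w' by blast+
    have "a = m" using a exponents_mon_field by blast
    moreover from this have "a \<in> exponents u"
      using a by (auto simp: exponents_def mon_field_def in_keys_iff h[symmetric] split: if_splits)
    ultimately have "\<phi> (a + c') < \<phi> (m + c)"
      using dominant_exp_add_less[OF add dom_u dom_w _ \<open>c' \<in> exponents w\<close>] \<open>c' \<noteq> c\<close> by blast
    then show "a + c' \<noteq> m + c" by auto
  qed
  moreover have "Poly_Mapping.lookup (vfield_bracket (mon_field m h) lead i) (m + c)
      = l * (pairing h c - pairing h m) * h i"
  proof -
    have "pairing (\<lambda>j. l * h j) m = l * pairing h m"
      by (simp add: pairing_def sum_distrib_left mult.assoc)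
    then show ?thesis
      unfolding lead_def vfield_bracket_mon_field by (simp add: algebra_simps)
  qed
  ultimately show ?thesis by (simp add: lookup_add)
qed

subsection \<open>Locally finite elements lie in the Cartan subalgebra\<close>

lemma ad_locally_finite_exponents_orbit_finite:
  assumes "ad_locally_finite (vfield u)"
  shows "finite (\<Union>k. exponents ((vfield_bracket u ^^ k) v))"
proof -
  obtain G where G: "finite G" "G \<subseteq> Witt" "\<And>k. (lie (vfield u) ^^ k) (vfield v) \<in> wspan G"
    using ad_locally_finite_orbit[OF assms vfield_in_Witt] by blast
  have "G \<subseteq> vfield ` UNIV" using G(2) by (simp add: Witt_eq_range_vfield)
  then obtain V where V: "finite V" "G = vfield ` V"
    using finite_subset_image[OF G(1)] by blast
  have "exponents ((vfield_bracket u ^^ k) v) \<subseteq> (\<Union>x\<in>V. exponents x)" for k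
  proof -
    obtain c where "vfield ((vfield_bracket u ^^ k) v) = (\<Sum>g\<in>vfield ` V. wscale (c g) g)"
      using G(3)[of k] unfolding V(2) lie_vfield_iterate wspan_def by (rule rangeE)
    also have "\<dots> = (\<Sum>x\<in>V. wscale (c (vfield x)) (vfield x))"
      by (simp add: sum.reindex inj_on_subset[OF inj_vfield])
    also have "\<dots> = vfield (\<lambda>j. \<Sum>x\<in>V. lconst (c (vfield x)) * x j)"
      by (rule sum_wscale_vfield)
    finally have "(vfield_bracket u ^^ k) v = (\<lambda>j. \<Sum>x\<in>V. lconst (c (vfield x)) * x j)"
      by (rule injD[OF inj_vfield])
    then show ?thesis
      using exponents_sum_lconst_mult[where c = "\<lambda>x. c (vfield x)" and g = "\<lambda>x. x" and I = V] by simp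
  qed
  then have "(\<Union>k. exponents ((vfield_bracket u ^^ k) v)) \<subseteq> (\<Union>x\<in>V. exponents x)" by blast
  moreover have "finite (\<Union>x\<in>V. exponents x)" using V(1) by (simp add: finite_exponents)
  ultimately show ?thesis by (rule finite_subset)
qed

text \<open>This is where characteristic zero is used.\<close>

lemma exists_exp_pairing_avoiding:
  fixes h :: "'n::finite \<Rightarrow> 'k::field_char_0"
  assumes "h j \<noteq> 0"
  shows "\<exists>b. \<forall>k::nat. pairing h b + of_nat k * pairing h m \<noteq> pairing h m"
proof (cases "pairing h m = 0")
  case True
  then show ?thesis
    using assms by (intro exI[of _ "Poly_Mapping.single j 1"]) (simp add: pairing_single_one)
next
  case False
  have "pairing h (m + m) + of_nat k * pairing h m \<noteq> pairing h m" for k :: nat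
  proof
    assume "pairing h (m + m) + of_nat k * pairing h m = pairing h m"
    then have "of_nat (Suc k) * pairing h m = 0" by (simp add: pairing_add algebra_simps)
    then show False using False by (simp only: mult_eq_0_iff of_nat_eq_0_iff) simp
  qed
  then show ?thesis by blast
qed

lemma inj_iterate_add:
  fixes m :: "'n \<Rightarrow>\<^sub>0 int"
  assumes "m \<noteq> 0"
  shows "inj (\<lambda>k. ((+) m ^^ k) b)"
proof (rule injI)
  fix k k' assume eq: "((+) m ^^ k) b = ((+) m ^^ k') b"
  obtain j where j: "Poly_Mapping.lookup m j \<noteq> 0"
    using assms by (metis poly_mapping_eqI lookup_zero)
  have lookup_iterate: "Poly_Mapping.lookup (((+) m ^^ n) b) j = Poly_Mapping.lookup b j + int n * Poly_Mapping.lookup m j" for n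
    by (induction n) (simp_all add: lookup_add algebra_simps)
  show "k = k'" using arg_cong[OF eq, of "\<lambda>a. Poly_Mapping.lookup a j"] j
    by (simp add: lookup_iterate)
qed

lemma vfield_bracket_iterate_leading_term:
  fixes \<phi> :: "('n::finite \<Rightarrow>\<^sub>0 int) \<Rightarrow> 'g::ordered_cancel_ab_semigroup_add"
  assumes add: "\<And>a b. \<phi> (a + b) = \<phi> a + \<phi> b"
    and dom: "dominant_exp \<phi> m u" and h: "\<And>j. Poly_Mapping.lookup (u j) m = h j"
  shows "dominant_exp \<phi> (((+) m ^^ k) b) ((vfield_bracket u ^^ k) (mon_field b h))
    \<and> (\<forall>j. Poly_Mapping.lookup ((vfield_bracket u ^^ k) (mon_field b h) j) (((+) m ^^ k) b)
        = (\<Prod>i<k. pairing h (((+) m ^^ i) b) - pairing h m) * h j)"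
proof (induction k)
  case 0
  have "dominant_exp \<phi> b (mon_field b h)"
    using exponents_mon_field unfolding dominant_exp_def by blast
  then show ?case by (simp add: mon_field_def)
next
  case (Suc k)
  then have dom_k: "dominant_exp \<phi> (((+) m ^^ k) b) ((vfield_bracket u ^^ k) (mon_field b h))"
    and lead_k: "\<And>j. Poly_Mapping.lookup ((vfield_bracket u ^^ k) (mon_field b h) j) (((+) m ^^ k) b)
        = (\<Prod>i<k. pairing h (((+) m ^^ i) b) - pairing h m) * h j"
    by blast+
  show ?case
    using dominant_exp_bracket[OF add dom dom_k] lookup_vfield_bracket_dominant[OF add dom dom_k h lead_k]
    by (simp add: mult.commute mult.left_commute)
qed

text \<open>For \<open>D = \<Sum>\<^sub>j u\<^sub>j H\<^sub>j\<close> with a nonzero dominant exponent \<open>m\<close>, the iterates \<open>(ad D)\<^sup>k E\<close> of a suitable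
  monomial field \<open>E = x\<^sup>b \<Sum>\<^sub>j u\<^sub>j\<^sub>m H\<^sub>j\<close> have the pairwise distinct exponents \<open>b + k m\<close>.\<close>

lemma not_ad_locally_finite_if_dominant_exp:
  fixes u :: "'n::finite \<Rightarrow> ('n, 'k::field_char_0) laurent"
    and \<phi> :: "('n \<Rightarrow>\<^sub>0 int) \<Rightarrow> 'g::ordered_cancel_ab_semigroup_add"
  assumes add: "\<And>a b. \<phi> (a + b) = \<phi> a + \<phi> b"
    and dom: "dominant_exp \<phi> m u" and m: "m \<in> exponents u" "m \<noteq> 0"
  shows "\<not> ad_locally_finite (vfield u)"
proof
  assume lf: "ad_locally_finite (vfield u)"
  define h where "h j = Poly_Mapping.lookup (u j) m" for j
  obtain j0 where j0: "h j0 \<noteq> 0"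
    using m(1) by (auto simp: exponents_def h_def in_keys_iff)
  obtain b where b: "\<And>k::nat. pairing h b + of_nat k * pairing h m \<noteq> pairing h m"
    using exists_exp_pairing_avoiding[of h j0 m] j0 by blast
  define e where "e k = ((+) m ^^ k) b" for k
  define w where "w k = (vfield_bracket u ^^ k) (mon_field b h)" for k
  have "pairing h (e k) = pairing h b + of_nat k * pairing h m" for k
    by (induction k) (simp_all add: e_def pairing_add algebra_simps)
  then have "(\<Prod>i<k. pairing h (e i) - pairing h m) \<noteq> 0" for k
    using b by simp
  then have "e k \<in> exponents (w k)" for k
    using vfield_bracket_iterate_leading_term[OF add dom h_def[symmetric], of k b] j0
    by (auto simp: exponents_def in_keys_iff e_def w_def)
  then have "range e \<subseteq> (\<Union>k. exponents (w k))" by blast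
  moreover have "finite (\<Union>k. exponents (w k))"
    unfolding w_def by (rule ad_locally_finite_exponents_orbit_finite[OF lf])
  ultimately have "finite (range e)" by (rule finite_subset)
  then show False
    using inj_iterate_add[OF m(2), of b] finite_imageD unfolding e_def by blast
qed

text \<open>Maximize a total group order on \<open>\<int>\<^sup>n\<close> over the exponents of \<open>D\<close>, and then its reverse: one of the two
  dominant exponents is nonzero unless all exponents vanish.\<close>

lemma ad_locally_finite_imp_Cartan:
  fixes D :: "('n::finite, 'k::field_char_0) wfield"
  assumes lf: "ad_locally_finite D"
  shows "D \<in> Cartan"
proof -
  obtain u where D: "D = vfield u"
    using lf Witt_eq_range_vfield unfolding ad_locally_finite_def by blast
  have "exponents u \<subseteq> {0}"
  proof
    fix a assume a: "a \<in> exponents u"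
    obtain \<phi> :: "('n \<Rightarrow>\<^sub>0 int) \<Rightarrow> nat \<Rightarrow>\<^sub>0 int" where \<phi>: "inj \<phi>" "\<And>a b. \<phi> (a + b) = \<phi> a + \<phi> b"
      using exists_inj_additive_ordered by blast
    have \<phi>': "inj (\<lambda>a. - \<phi> a)" "\<And>a b. - \<phi> (a + b) = - \<phi> a + - \<phi> b"
      using \<phi> by (simp_all add: inj_def)
    obtain m where m: "m \<in> exponents u" "dominant_exp \<phi> m u"
      using exists_dominant_exp[OF \<phi>(1) finite_exponents] a by blast
    obtain m' where m': "m' \<in> exponents u" "dominant_exp (\<lambda>a. - \<phi> a) m' u"
      using exists_dominant_exp[OF \<phi>'(1) finite_exponents] a by blast
    have "m = 0" "m' = 0"
      using not_ad_locally_finite_if_dominant_exp[OF \<phi>(2) m(2) m(1)]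
        not_ad_locally_finite_if_dominant_exp[OF \<phi>'(2) m'(2) m'(1)] lf D by blast+
    with a m(2) m'(2) show "a \<in> {0}"
      unfolding dominant_exp_def using less_asym neg_less_iff_less by blast
  qed
  then have "u i = lconst (Poly_Mapping.lookup (u i) 0)" for i
    using poly_mapping_eq_sum_single[of "{0}" "u i"] by (auto simp: exponents_def lconst_def)
  then have "D = vfield (\<lambda>i. lconst (Poly_Mapping.lookup (u i) 0))"
    unfolding D by metis
  then show ?thesis
    unfolding Cartan_eq_range_vfield by (rule range_eqI[where x = "\<lambda>i. Poly_Mapping.lookup (u i) 0"])
qed

lemma Cartan_eq_ad_locally_finite:
  "(Cartan :: ('n::finite, 'k::field_char_0) wfield set) = {D. ad_locally_finite D}"
  using Cartan_imp_ad_locally_finite ad_locally_finite_imp_Cartan by blast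

theorem lemma2p5:
  fixes \<sigma> :: "(('n::finite, 'k::field_char_0) laurent \<Rightarrow> ('n, 'k) laurent)
              \<Rightarrow> (('n, 'k) laurent \<Rightarrow> ('n, 'k) laurent)"
  assumes "witt_aut \<sigma>"
  shows "\<sigma> ` Cartan = Cartan"
proof -
  have aut_Cartan_iff: "\<sigma> D \<in> Cartan \<longleftrightarrow> D \<in> Cartan" if "D \<in> Witt" for D
    using ad_locally_finite_aut_iff[OF assms that] unfolding Cartan_eq_ad_locally_finite by simp
  show ?thesis
  proof
    show "\<sigma> ` Cartan \<subseteq> Cartan" using aut_Cartan_iff Cartan_subset_Witt by blast
    show "Cartan \<subseteq> \<sigma> ` Cartan"
    proof
      fix D :: "('n, 'k) wfield" assume "D \<in> Cartan"
      then obtain D' where "D' \<in> Witt" "D = \<sigma> D'"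
        using Cartan_subset_Witt aut_image[OF assms] by blast
      then show "D \<in> \<sigma> ` Cartan" using aut_Cartan_iff \<open>D \<in> Cartan\<close> by blast
    qed
  qed
qed

end
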